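(* $\displaystyle \frac{S_n}{n\log n}\to 1$ in distribution (equivalently, in probability) with respect to $\lambda$, as $n\to\infty$.
   Context: Let $\lambda$ be Lebesgue measure on $[0,1)$, $\tau(x)=2x\bmod 1$ the doubling map, $\chi(x)=\lfloor 1/x\rfloor$ (with $\chi(0)=\infty$), $a_n=\chi\circ\tau^{n-1}$ and $S_n=\sum_{k=1}^n a_k$. *)

theory Defs
  imports "HOL-Analysis.Analysis"
begin

definition tau :: "real \<Rightarrow> real" where
  "tau x = frac (2 * x)"

definition chi :: "real \<Rightarrow> ereal" where
  "chi x = (if x = 0 then \<infinity> else ereal (real_of_int \<lfloor>1 / x\<rfloor>))"

definition digit :: "nat \<Rightarrow> real \<Rightarrow> ereal" where
  "digit n x = chi ((tau ^^ (n - 1)) x)"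

definition Ssum :: "nat \<Rightarrow> real \<Rightarrow> ereal" where
  "Ssum n x = (\<Sum>k = 1..n. digit k x)"

end

theory Submission
  imports Defs "HOL-Real_Asymp.Real_Asymp"
begin

text \<open>Truncate the digits at level \<open>N = n sqrt (ln n)\<close>: with probability at most \<open>n / N\<close> one of
  \<open>a\<^sub>1, \<dots>, a\<^sub>n\<close> exceeds \<open>N\<close>, and otherwise \<open>S\<^sub>n\<close> is the Birkhoff sum of the truncated digit
  \<open>f\<^sub>N = min N \<chi>\<close>, whose mean is \<open>ln N + O(1)\<close>. The transfer operator of the doubling map averages
  over the two preimages, so its \<open>j\<close>-th power averages over \<open>2\<^sup>j\<close> dyadic translates; for a
  decreasing \<open>0 \<le> f \<le> N\<close> this exceeds the mean of \<open>f\<close> by at most \<open>N / 2\<^sup>j\<close>. The resulting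
  exponential decay of correlations bounds the variance of the Birkhoff sum by \<open>O(n N ln N)\<close>,
  which is \<open>o((n ln n)\<^sup>2)\<close>, and Chebyshev's inequality concludes.\<close>

section \<open>The doubling map\<close>

lemma tau_measurable [measurable]: "tau \<in> borel_measurable borel"
  unfolding tau_def frac_def by measurable

lemma funpow_tau_measurable [measurable]: "(tau ^^ k) \<in> borel_measurable borel"
  by (rule measurable_compose_n) simp

lemma tau_in_unit: "tau x \<in> {0..<1}"
  by (simp add: tau_def frac_lt_1)

lemma funpow_tau_in_unit: "x \<in> {0..<1} \<Longrightarrow> (tau ^^ k) x \<in> {0..<1}"
  by (cases k) (simp_all only: funpow.simps comp_apply id_apply tau_in_unit)

lemma tau_inverse_branches:
  assumes "y \<in> {0..<1}"
  shows "tau (y / 2) = y" "tau ((y + 1) / 2) = y"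
  using assms by (simp_all add: tau_def frac_eq add_divide_distrib frac_1_eq)

lemma dyadic_point_in_unit:
  assumes "i < (2::nat) ^ j" "u \<in> {0..<1}"
  shows "(real i + u) / 2 ^ j \<in> {0..<1}"
proof -
  have "real (i + 1) \<le> real (2 ^ j)"
    using assms(1) by (intro of_nat_mono) simp
  then have "real i + u < 2 ^ j"
    using assms(2) by simp
  with assms(2) show ?thesis
    by (simp add: divide_less_eq)
qed

section \<open>Means over the unit interval\<close>

abbreviation unit_mean :: "(real \<Rightarrow> real) \<Rightarrow> real" where
  "unit_mean F \<equiv> \<integral>x. indicator {0..<1::real} x * F x \<partial>lborel"

definition unit_bounded :: "(real \<Rightarrow> real) \<Rightarrow> bool" where
  "unit_bounded F \<longleftrightarrow> F \<in> borel_measurable borel \<and> (\<exists>B. \<forall>x\<in>{0..<1}. \<bar>F x\<bar> \<le> B)"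

lemma unit_boundedI:
  "(\<And>x. x \<in> {0..<1} \<Longrightarrow> \<bar>F x\<bar> \<le> B) \<Longrightarrow> F \<in> borel_measurable borel \<Longrightarrow> unit_bounded F"
  unfolding unit_bounded_def by blast

lemma unit_boundedE:
  assumes "unit_bounded F"
  obtains B where "F \<in> borel_measurable borel" "\<And>x. x \<in> {0..<1} \<Longrightarrow> \<bar>F x\<bar> \<le> B"
  using assms unfolding unit_bounded_def by blast

lemma unit_bounded_const [simp]: "unit_bounded (\<lambda>_. c)"
  by (rule unit_boundedI[of _ "\<bar>c\<bar>"]) simp_all

lemma unit_bounded_indicator: "A \<in> sets borel \<Longrightarrow> unit_bounded (indicator A)"
  by (rule unit_boundedI[of _ 1]) (auto split: split_indicator)

lemma unit_bounded_add:
  assumes "unit_bounded F" "unit_bounded G"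
  shows "unit_bounded (\<lambda>x. F x + G x)"
proof -
  obtain B C where [measurable]: "F \<in> borel_measurable borel" "G \<in> borel_measurable borel"
    and B: "\<And>x. x \<in> {0..<1} \<Longrightarrow> \<bar>F x\<bar> \<le> B" and C: "\<And>x. x \<in> {0..<1} \<Longrightarrow> \<bar>G x\<bar> \<le> C"
    using assms by (metis unit_boundedE)
  have "\<bar>F x + G x\<bar> \<le> B + C" if "x \<in> {0..<1}" for x
    using B[OF that] C[OF that] abs_triangle_ineq[of "F x" "G x"] by linarith
  then show ?thesis
    by (rule unit_boundedI) measurable
qed

lemma unit_bounded_diff:
  assumes "unit_bounded F" "unit_bounded G"
  shows "unit_bounded (\<lambda>x. F x - G x)"
proof -
  obtain B C where [measurable]: "F \<in> borel_measurable borel" "G \<in> borel_measurable borel"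
    and B: "\<And>x. x \<in> {0..<1} \<Longrightarrow> \<bar>F x\<bar> \<le> B" and C: "\<And>x. x \<in> {0..<1} \<Longrightarrow> \<bar>G x\<bar> \<le> C"
    using assms by (metis unit_boundedE)
  have "\<bar>F x - G x\<bar> \<le> B + C" if "x \<in> {0..<1}" for x
    using B[OF that] C[OF that] abs_triangle_ineq4[of "F x" "G x"] by linarith
  then show ?thesis
    by (rule unit_boundedI) measurable
qed

lemma unit_bounded_mult:
  assumes "unit_bounded F" "unit_bounded G"
  shows "unit_bounded (\<lambda>x. F x * G x)"
proof -
  obtain B C where [measurable]: "F \<in> borel_measurable borel" "G \<in> borel_measurable borel"
    and B: "\<And>x. x \<in> {0..<1} \<Longrightarrow> \<bar>F x\<bar> \<le> B" and C: "\<And>x. x \<in> {0..<1} \<Longrightarrow> \<bar>G x\<bar> \<le> C"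
    using assms by (metis unit_boundedE)
  have "\<bar>F x * G x\<bar> \<le> B * C" if "x \<in> {0..<1}" for x
    unfolding abs_mult using B[OF that] C[OF that] by (intro mult_mono') auto
  then show ?thesis
    by (rule unit_boundedI) measurable
qed

lemma unit_bounded_sum:
  "(\<And>i. i \<in> I \<Longrightarrow> unit_bounded (F i)) \<Longrightarrow> unit_bounded (\<lambda>x. \<Sum>i\<in>I. F i x)"
  by (induction I rule: infinite_finite_induct) (auto intro: unit_bounded_add)

lemma unit_bounded_compose:
  assumes "unit_bounded F" and [measurable]: "g \<in> borel_measurable borel"
    and g: "\<And>x. x \<in> {0..<1} \<Longrightarrow> g x \<in> {0..<1}"
  shows "unit_bounded (\<lambda>x. F (g x))"
proof -
  obtain B where [measurable]: "F \<in> borel_measurable borel"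
    and B: "\<And>x. x \<in> {0..<1} \<Longrightarrow> \<bar>F x\<bar> \<le> B"
    using assms(1) by (metis unit_boundedE)
  have "\<bar>F (g x)\<bar> \<le> B" if "x \<in> {0..<1}" for x
    using B[OF g[OF that]] .
  then show ?thesis
    by (rule unit_boundedI) measurable
qed

lemma unit_bounded_dyadic_translate:
  "unit_bounded H \<Longrightarrow> i < 2 ^ j \<Longrightarrow> unit_bounded (\<lambda>u. H ((real i + u) / 2 ^ j))"
  by (rule unit_bounded_compose[where g = "\<lambda>u. (real i + u) / 2 ^ j"])
     (simp_all add: dyadic_point_in_unit del: atLeastLessThan_iff)

lemma unit_bounded_funpow_tau: "unit_bounded G \<Longrightarrow> unit_bounded (\<lambda>x. G ((tau ^^ k) x))"
  by (rule unit_bounded_compose[where g = "tau ^^ k"]) (simp_all add: funpow_tau_in_unit del: atLeastLessThan_iff)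

lemma integrable_unit_bounded:
  assumes "unit_bounded F"
  shows "integrable lborel (\<lambda>x. indicator {0..<1::real} x * F x)"
proof -
  obtain B where [measurable]: "F \<in> borel_measurable borel"
    and B: "\<And>x. x \<in> {0..<1} \<Longrightarrow> \<bar>F x\<bar> \<le> B"
    using assms by (metis unit_boundedE)
  have "integrable lborel (\<lambda>x. B * indicator {0..<1::real} x)"
    by (intro integrable_mult_right integrable_real_indicator) auto
  then show ?thesis
    by (rule Bochner_Integration.integrable_bound)
      (auto intro!: AE_I2 intro: order_trans[OF B abs_ge_self] split: split_indicator)
qed

lemma integrable_unit_bounded_on:
  assumes "unit_bounded F" "S \<in> sets borel" "S \<subseteq> {0..<1}"
  shows "integrable lborel (\<lambda>x. indicator S x * F x)"
proof -
  have "integrable lborel (\<lambda>x. indicator {0..<1::real} x * (indicator S x * F x))"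
    using assms by (intro integrable_unit_bounded unit_bounded_mult unit_bounded_indicator)
  moreover have "indicator {0..<1::real} x * (indicator S x * F x) = indicator S x * F x" for x
    using assms(3) by (auto split: split_indicator)
  ultimately show ?thesis by simp
qed

lemma unit_mean_cong: "(\<And>x. x \<in> {0..<1} \<Longrightarrow> F x = G x) \<Longrightarrow> unit_mean F = unit_mean G"
  by (rule Bochner_Integration.integral_cong) (auto split: split_indicator)

lemma unit_mean_add:
  "unit_bounded F \<Longrightarrow> unit_bounded G \<Longrightarrow> unit_mean (\<lambda>x. F x + G x) = unit_mean F + unit_mean G"
  using Bochner_Integration.integral_add[OF integrable_unit_bounded integrable_unit_bounded, of F G]
  by (simp add: distrib_left)

lemma unit_mean_diff:
  "unit_bounded F \<Longrightarrow> unit_bounded G \<Longrightarrow> unit_mean (\<lambda>x. F x - G x) = unit_mean F - unit_mean G"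
  using Bochner_Integration.integral_diff[OF integrable_unit_bounded integrable_unit_bounded, of F G]
  by (simp add: right_diff_distrib)

lemma unit_mean_cmult: "unit_mean (\<lambda>x. c * F x) = c * unit_mean F"
  using integral_mult_right_zero[of lborel c "\<lambda>x. indicator {0..<1::real} x * F x"]
  by (simp add: ac_simps)

lemma unit_mean_sum:
  "finite I \<Longrightarrow> (\<And>i. i \<in> I \<Longrightarrow> unit_bounded (F i))
    \<Longrightarrow> unit_mean (\<lambda>x. \<Sum>i\<in>I. F i x) = (\<Sum>i\<in>I. unit_mean (F i))"
  by (induction I rule: finite_induct) (simp_all add: unit_mean_add unit_bounded_sum)

lemma unit_mean_mono:
  "unit_bounded F \<Longrightarrow> unit_bounded G \<Longrightarrow> (\<And>x. x \<in> {0..<1} \<Longrightarrow> F x \<le> G x)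
    \<Longrightarrow> unit_mean F \<le> unit_mean G"
  by (rule integral_mono[OF integrable_unit_bounded integrable_unit_bounded])
     (auto split: split_indicator)

lemma unit_mean_nonneg: "(\<And>x. x \<in> {0..<1} \<Longrightarrow> 0 \<le> F x) \<Longrightarrow> 0 \<le> unit_mean F"
  by (rule Bochner_Integration.integral_nonneg) (auto split: split_indicator)

lemma integral_indicator_interval_rescale:
  fixes F :: "real \<Rightarrow> real"
  assumes "a < b"
  shows "(\<integral>x. indicator {a..<b} x * F x \<partial>lborel) = (b - a) * unit_mean (\<lambda>y. F (a + (b - a) * y))"
proof -
  have ind: "indicator {a..<b} (a + (b - a) * y) = (indicator {0..<1} y :: real)" for y
  proof -
    have "a + (b - a) * y < b \<longleftrightarrow> (b - a) * y < (b - a) * 1"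
      by auto
    also have "\<dots> \<longleftrightarrow> y < 1"
      using assms by (intro mult_less_cancel_left_pos) simp
    finally have "a + (b - a) * y < b \<longleftrightarrow> y < 1" .
    moreover have "a \<le> a + (b - a) * y \<longleftrightarrow> 0 \<le> y"
      using assms by (simp add: zero_le_mult_iff)
    ultimately show ?thesis
      by (simp split: split_indicator)
  qed
  have "(\<integral>x. indicator {a..<b} x * F x \<partial>lborel)
      = \<bar>b - a\<bar> *\<^sub>R (\<integral>y. indicator {a..<b} (a + (b - a) * y) * F (a + (b - a) * y) \<partial>lborel)"
    using assms by (intro lborel_integral_real_affine) simp
  also have "\<dots> = \<bar>b - a\<bar> *\<^sub>R unit_mean (\<lambda>y. F (a + (b - a) * y))"
    by (simp only: ind)
  finally show ?thesis
    using assms by (simp only: real_scaleR_def abs_of_pos diff_gt_0_iff_gt)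
qed

lemma measure_unit_le_unit_mean:
  assumes [measurable]: "{x. P x} \<in> sets borel" and "unit_bounded F"
    and "\<And>x. x \<in> {0..<1} \<Longrightarrow> 0 \<le> F x" "\<And>x. x \<in> {0..<1} \<Longrightarrow> P x \<Longrightarrow> 1 \<le> F x"
  shows "measure lborel {x \<in> {0..<1::real}. P x} \<le> unit_mean F"
proof -
  have "measure lborel {x \<in> {0..<1::real}. P x} = (\<integral>x. indicator {x \<in> {0..<1::real}. P x} x \<partial>lborel)"
    by simp
  also have "\<dots> = unit_mean (indicator {x. P x})"
    by (rule Bochner_Integration.integral_cong) (auto split: split_indicator)
  also have "\<dots> \<le> unit_mean F"
    using assms by (intro unit_mean_mono unit_bounded_indicator) (auto split: split_indicator)
  finally show ?thesis .
qed

section \<open>The transfer operator\<close>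

definition transfer_op :: "(real \<Rightarrow> real) \<Rightarrow> real \<Rightarrow> real" where
  "transfer_op H y = (H (y / 2) + H ((y + 1) / 2)) / 2"

lemma unit_bounded_inverse_branches:
  assumes "unit_bounded H"
  shows "unit_bounded (\<lambda>y. H (y / 2))" "unit_bounded (\<lambda>y. H ((y + 1) / 2))"
  using assms by (auto intro: unit_bounded_compose[where g = "\<lambda>y. y / 2"]
      unit_bounded_compose[where g = "\<lambda>y. (y + 1) / 2"])

lemma unit_bounded_transfer_op: "unit_bounded H \<Longrightarrow> unit_bounded (transfer_op H)"
  using unit_bounded_mult[OF unit_bounded_const[of "1/2"]
      unit_bounded_add[OF unit_bounded_inverse_branches]]
  by (simp add: transfer_op_def[abs_def])

lemma unit_bounded_funpow_transfer_op: "unit_bounded H \<Longrightarrow> unit_bounded ((transfer_op ^^ j) H)"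
  by (induction j) (auto intro: unit_bounded_transfer_op)

lemma funpow_transfer_op_const: "(transfer_op ^^ j) (\<lambda>_. c) = (\<lambda>_. c)"
  by (induction j) (simp_all add: transfer_op_def[abs_def])

lemma sum_lessThan_double: "(\<Sum>i<2 * (m::nat). g i) = (\<Sum>i<m. g i) + (\<Sum>i<m. g (i + m))"
proof -
  have "(\<Sum>i<2 * m. g i) = (\<Sum>i=0..<m. g i) + (\<Sum>i=m..<m + m. g i)"
    by (subst sum.atLeastLessThan_concat) (auto simp: atLeast0LessThan mult_2)
  also have "(\<Sum>i=m..<m + m. g i) = (\<Sum>i=0..<m. g (i + m))"
    using sum.shift_bounds_nat_ivl[of g 0 m m] by simp
  finally show ?thesis by (simp add: atLeast0LessThan)
qed

lemma funpow_transfer_op_eq: "(transfer_op ^^ j) H y = (\<Sum>i<2 ^ j. H ((real i + y) / 2 ^ j)) / 2 ^ j"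
proof (induction j arbitrary: H y)
  case (Suc j)
  have "(transfer_op ^^ Suc j) H y = (\<Sum>i<2 ^ j. transfer_op H ((real i + y) / 2 ^ j)) / 2 ^ j"
    by (simp add: Suc.IH funpow_Suc_right del: funpow.simps)
  also have "\<dots> = ((\<Sum>i<2 ^ j. H ((real i + y) / 2 ^ Suc j))
      + (\<Sum>i<2 ^ j. H ((real (i + 2 ^ j) + y) / 2 ^ Suc j))) / 2 ^ Suc j"
    by (simp add: transfer_op_def sum.distrib field_simps sum_divide_distrib[symmetric])
  also have "\<dots> = (\<Sum>i<2 ^ Suc j. H ((real i + y) / 2 ^ Suc j)) / 2 ^ Suc j"
    by (simp only: power_Suc sum_lessThan_double[where m = "2 ^ j"])
  finally show ?case .
qed simp

lemma unit_mean_transfer_op_dual: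
  assumes H: "unit_bounded H" and G: "unit_bounded G"
  shows "unit_mean (\<lambda>x. H x * G (tau x)) = unit_mean (\<lambda>y. transfer_op H y * G y)"
proof -
  let ?f = "\<lambda>x. H x * G (tau x)"
  have f: "unit_bounded ?f"
    using H G tau_in_unit by (intro unit_bounded_mult unit_bounded_compose[of G tau]) auto
  have left: "unit_bounded (\<lambda>y. H (y / 2) * G y)" and right: "unit_bounded (\<lambda>y. H ((y + 1) / 2) * G y)"
    using H G by (auto intro: unit_bounded_mult unit_bounded_inverse_branches)
  have "unit_mean ?f
      = (\<integral>x. indicator {0..<1/2} x * ?f x + indicator {1/2..<1} x * ?f x \<partial>lborel)"
    by (rule Bochner_Integration.integral_cong) (auto split: split_indicator)
  also have "\<dots> = (\<integral>x. indicator {0..<1/2} x * ?f x \<partial>lborel) + (\<integral>x. indicator {1/2..<1} x * ?f x \<partial>lborel)"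
    using f by (intro Bochner_Integration.integral_add integrable_unit_bounded_on) auto
  also have "(\<integral>x. indicator {0..<1/2} x * ?f x \<partial>lborel) = unit_mean (\<lambda>y. ?f (y / 2)) / 2"
    using integral_indicator_interval_rescale[of 0 "1/2" ?f] by simp
  also have "unit_mean (\<lambda>y. ?f (y / 2)) = unit_mean (\<lambda>y. H (y / 2) * G y)"
    by (rule unit_mean_cong) (simp add: tau_inverse_branches)
  also have "(\<integral>x. indicator {1/2..<1} x * ?f x \<partial>lborel) = unit_mean (\<lambda>y. ?f ((y + 1) / 2)) / 2"
    using integral_indicator_interval_rescale[of "1/2" 1 ?f] by (simp add: add_divide_distrib add.commute)
  also have "unit_mean (\<lambda>y. ?f ((y + 1) / 2)) = unit_mean (\<lambda>y. H ((y + 1) / 2) * G y)"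
    by (rule unit_mean_cong) (simp add: tau_inverse_branches)
  also have "unit_mean (\<lambda>y. H (y / 2) * G y) / 2 + unit_mean (\<lambda>y. H ((y + 1) / 2) * G y) / 2
      = unit_mean (\<lambda>y. (1/2) * (H (y / 2) * G y + H ((y + 1) / 2) * G y))"
    by (simp add: unit_mean_cmult unit_mean_add[OF left right])
  also have "\<dots> = unit_mean (\<lambda>y. transfer_op H y * G y)"
    by (simp add: transfer_op_def field_simps)
  finally show ?thesis .
qed

lemma unit_mean_funpow_transfer_op_dual:
  assumes "unit_bounded H" and G: "unit_bounded G"
  shows "unit_mean (\<lambda>x. H x * G ((tau ^^ j) x)) = unit_mean (\<lambda>y. (transfer_op ^^ j) H y * G y)"
  using assms(1)
proof (induction j arbitrary: H)
  case (Suc j)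
  have "unit_mean (\<lambda>x. H x * G ((tau ^^ Suc j) x)) = unit_mean (\<lambda>x. H x * G ((tau ^^ j) (tau x)))"
    by (simp add: funpow_Suc_right del: funpow.simps)
  also have "\<dots> = unit_mean (\<lambda>y. transfer_op H y * G ((tau ^^ j) y))"
    by (rule unit_mean_transfer_op_dual[OF Suc.prems unit_bounded_funpow_tau[OF G]])
  also have "\<dots> = unit_mean (\<lambda>y. (transfer_op ^^ j) (transfer_op H) y * G y)"
    by (rule Suc.IH[OF unit_bounded_transfer_op[OF Suc.prems]])
  finally show ?case
    by (simp add: funpow_Suc_right del: funpow.simps)
qed simp

lemma unit_mean_funpow_tau: "unit_bounded G \<Longrightarrow> unit_mean (\<lambda>x. G ((tau ^^ k) x)) = unit_mean G"
  using unit_mean_funpow_transfer_op_dual[OF unit_bounded_const, of G 1 k]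
  by (simp add: funpow_transfer_op_const)

lemma unit_mean_funpow_transfer_op: "unit_bounded H \<Longrightarrow> unit_mean ((transfer_op ^^ j) H) = unit_mean H"
  using unit_mean_funpow_transfer_op_dual[OF _ unit_bounded_const, of H 1 j] by simp

lemma sum_unit_mean_dyadic:
  assumes H: "unit_bounded H"
  shows "(\<Sum>i<2 ^ j. unit_mean (\<lambda>u. H ((real i + u) / 2 ^ j))) = 2 ^ j * unit_mean H"
proof -
  have "(\<Sum>i<2 ^ j. unit_mean (\<lambda>u. H ((real i + u) / 2 ^ j)))
      = unit_mean (\<lambda>u. \<Sum>i<2 ^ j. H ((real i + u) / 2 ^ j))"
    by (rule unit_mean_sum[symmetric]) (simp_all add: unit_bounded_dyadic_translate[OF H])
  also have "\<dots> = unit_mean (\<lambda>u. 2 ^ j * (transfer_op ^^ j) H u)"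
    by (simp add: funpow_transfer_op_eq)
  finally show ?thesis
    using H by (simp add: unit_mean_cmult unit_mean_funpow_transfer_op)
qed

section \<open>Decay of correlations for decreasing observables\<close>

lemma sum_half_powers_le: "(\<Sum>k<n. (1/2::real) ^ (n - k)) \<le> 1"
proof (induction n)
  case (Suc n)
  have "(\<Sum>k<Suc n. (1/2::real) ^ (Suc n - k)) = (1/2) * ((\<Sum>k<n. (1/2::real) ^ (n - k)) + 1)"
    by (simp add: sum_distrib_left Suc_diff_le) (simp add: sum_divide_distrib[symmetric])
  with Suc show ?case by simp
qed simp

lemma sum_sum_half_powers_dist_le:
  "(\<Sum>k<n. \<Sum>l<n. (1/2::real) ^ (max k l - min k l)) \<le> 3 * real n"
proof (induction n)
  case (Suc n)
  have row: "(\<Sum>k<n. (1/2::real) ^ (max k n - min k n)) = (\<Sum>k<n. (1/2) ^ (n - k))"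
    and column: "(\<Sum>l<n. (1/2::real) ^ (max n l - min n l)) = (\<Sum>k<n. (1/2) ^ (n - k))"
    by (auto intro!: sum.cong simp: max_def min_def)
  have "(\<Sum>k<Suc n. \<Sum>l<Suc n. (1/2::real) ^ (max k l - min k l))
      = (\<Sum>k<n. \<Sum>l<n. (1/2) ^ (max k l - min k l)) + (\<Sum>k<n. (1/2) ^ (max k n - min k n))
        + (\<Sum>l<n. (1/2) ^ (max n l - min n l)) + 1"
    by (simp add: sum.distrib)
  also have "\<dots> \<le> 3 * real n + 1 + 1 + 1"
    unfolding row column using Suc sum_half_powers_le[of n] by linarith
  finally show ?case by simp
qed simp

locale decreasing_observable =
  fixes f :: "real \<Rightarrow> real" and N :: real
  assumes f_measurable [measurable]: "f \<in> borel_measurable borel"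
    and f_antimono: "antimono_on {0..<1} f"
    and f_nonneg: "\<And>x. x \<in> {0..<1} \<Longrightarrow> 0 \<le> f x"
    and f_le_N: "\<And>x. x \<in> {0..<1} \<Longrightarrow> f x \<le> N"
begin

lemma unit_bounded_f: "unit_bounded f"
  by (rule unit_boundedI[of _ N]) (auto simp: abs_of_nonneg f_nonneg f_le_N f_measurable)

lemma unit_bounded_f_funpow_tau: "unit_bounded (\<lambda>x. f ((tau ^^ k) x))"
  by (rule unit_bounded_funpow_tau[OF unit_bounded_f])

lemma N_nonneg: "0 \<le> N"
  using f_nonneg[of 0] f_le_N[of 0] by simp

lemma unit_mean_f_nonneg: "0 \<le> unit_mean f"
  by (rule unit_mean_nonneg) (rule f_nonneg)

text \<open>Of the \<open>2\<^sup>j\<close> values averaged by \<open>transfer_op ^^ j\<close>, all but the first are dominated by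
  the mean of \<open>f\<close> over the neighbouring dyadic interval to the left.\<close>

lemma funpow_transfer_op_le:
  assumes z: "z \<in> {0..<1}"
  shows "(transfer_op ^^ j) f z \<le> unit_mean f + N / 2 ^ j"
proof -
  let ?h = "\<lambda>i. unit_mean (\<lambda>u. f ((real i + u) / 2 ^ j))"
  obtain a where a: "(2::nat) ^ j = Suc a"
    using not0_implies_Suc[of "2 ^ j"] by auto
  have shift: "f ((real (Suc i) + z) / 2 ^ j) \<le> ?h i" if "i < a" for i
  proof -
    have "unit_mean (\<lambda>_. f ((real (Suc i) + z) / 2 ^ j)) \<le> ?h i"
    proof (rule unit_mean_mono[OF unit_bounded_const unit_bounded_dyadic_translate[OF unit_bounded_f]])
      fix u :: real assume u: "u \<in> {0..<1}"
      have "(real i + u) / 2 ^ j \<le> (real (Suc i) + z) / 2 ^ j"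
        using u z by (auto intro!: divide_right_mono)
      then show "f ((real (Suc i) + z) / 2 ^ j) \<le> f ((real i + u) / 2 ^ j)"
        using that a u z by (intro monotone_onD[OF f_antimono] dyadic_point_in_unit) auto
    qed (use that a in auto)
    then show ?thesis by simp
  qed
  have "(transfer_op ^^ j) f z = (\<Sum>i<Suc a. f ((real i + z) / 2 ^ j)) / 2 ^ j"
    by (simp only: funpow_transfer_op_eq a)
  also have "\<dots> = (f (z / 2 ^ j) + (\<Sum>i<a. f ((real (Suc i) + z) / 2 ^ j))) / 2 ^ j"
    by (simp only: sum.lessThan_Suc_shift of_nat_0 add_0_left)
  also have "\<dots> \<le> (N + (\<Sum>i<Suc a. ?h i)) / 2 ^ j"
  proof (intro divide_right_mono add_mono)
    show "f (z / 2 ^ j) \<le> N"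
      using dyadic_point_in_unit[of 0 j z] z by (simp add: f_le_N)
    have "0 \<le> ?h a"
      by (intro unit_mean_nonneg f_nonneg dyadic_point_in_unit) (use a in auto)
    moreover have "(\<Sum>i<a. f ((real (Suc i) + z) / 2 ^ j)) \<le> (\<Sum>i<a. ?h i)"
      by (intro sum_mono shift) simp
    ultimately show "(\<Sum>i<a. f ((real (Suc i) + z) / 2 ^ j)) \<le> (\<Sum>i<Suc a. ?h i)"
      by simp
  qed simp
  also have "(\<Sum>i<Suc a. ?h i) = 2 ^ j * unit_mean f"
    using sum_unit_mean_dyadic[OF unit_bounded_f, of j] a by simp
  finally show ?thesis
    by (simp add: field_simps)
qed

lemma correlation_le:
  assumes "k \<le> l"
  shows "unit_mean (\<lambda>x. f ((tau ^^ k) x) * f ((tau ^^ l) x))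
    \<le> (unit_mean f)\<^sup>2 + N * unit_mean f / 2 ^ (l - k)"
proof -
  define j where "j = l - k"
  have l: "l = j + k" using assms unfolding j_def by simp
  have "unit_mean (\<lambda>x. f ((tau ^^ k) x) * f ((tau ^^ l) x))
      = unit_mean (\<lambda>x. (\<lambda>y. f y * f ((tau ^^ j) y)) ((tau ^^ k) x))"
    by (simp add: l funpow_add)
  also have "\<dots> = unit_mean (\<lambda>y. f y * f ((tau ^^ j) y))"
    by (rule unit_mean_funpow_tau[where G = "\<lambda>y. f y * f ((tau ^^ j) y)"])
       (intro unit_bounded_mult unit_bounded_f unit_bounded_f_funpow_tau)
  also have "\<dots> = unit_mean (\<lambda>y. (transfer_op ^^ j) f y * f y)"
    by (rule unit_mean_funpow_transfer_op_dual[OF unit_bounded_f unit_bounded_f])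
  also have "\<dots> \<le> unit_mean (\<lambda>y. (unit_mean f + N / 2 ^ j) * f y)"
    by (intro unit_mean_mono unit_bounded_mult unit_bounded_funpow_transfer_op unit_bounded_f
        unit_bounded_const mult_right_mono funpow_transfer_op_le f_nonneg)
  also have "\<dots> = (unit_mean f + N / 2 ^ j) * unit_mean f"
    by (rule unit_mean_cmult)
  finally show ?thesis
    by (simp add: j_def power2_eq_square algebra_simps)
qed

lemma covariance_le:
  "unit_mean (\<lambda>x. (f ((tau ^^ k) x) - unit_mean f) * (f ((tau ^^ l) x) - unit_mean f))
    \<le> N * unit_mean f * (1/2) ^ (max k l - min k l)"
proof -
  let ?m = "unit_mean f"
  let ?fk = "\<lambda>x. f ((tau ^^ k) x)" and ?fl = "\<lambda>x. f ((tau ^^ l) x)"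
  have bk: "unit_bounded ?fk" and bl: "unit_bounded ?fl"
    by (simp_all add: unit_bounded_f_funpow_tau)
  have Efk: "unit_mean ?fk = ?m" and Efl: "unit_mean ?fl = ?m"
    by (simp_all add: unit_mean_funpow_tau unit_bounded_f)
  have prod: "unit_bounded (\<lambda>x. ?fk x * ?fl x - ?m * ?fl x)"
    by (intro unit_bounded_diff unit_bounded_mult unit_bounded_const bk bl)
  have centred: "unit_bounded (\<lambda>x. ?m * (?fk x - ?m))"
    by (intro unit_bounded_mult unit_bounded_diff unit_bounded_const bk)
  have "unit_mean (\<lambda>x. (?fk x - ?m) * (?fl x - ?m))
      = unit_mean (\<lambda>x. (?fk x * ?fl x - ?m * ?fl x) - ?m * (?fk x - ?m))"
    by (simp add: algebra_simps)
  also have "\<dots> = unit_mean (\<lambda>x. ?fk x * ?fl x) - ?m * unit_mean ?fl - ?m * (unit_mean ?fk - ?m)"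
    by (simp only: unit_mean_diff[OF prod centred] unit_mean_diff[OF unit_bounded_mult[OF bk bl]
        unit_bounded_mult[OF unit_bounded_const bl]] unit_mean_diff[OF bk unit_bounded_const]
        unit_mean_cmult) simp
  also have "\<dots> = unit_mean (\<lambda>x. ?fk x * ?fl x) - ?m\<^sup>2"
    by (simp add: Efk Efl power2_eq_square)
  also have "\<dots> \<le> N * ?m * (1/2) ^ (max k l - min k l)"
  proof (cases "k \<le> l")
    case True
    then show ?thesis
      using correlation_le[OF True] by (simp add: power_one_over max_def min_def)
  next
    case False
    then show ?thesis
      using correlation_le[of l k] by (simp add: power_one_over max_def min_def mult.commute)
  qed
  finally show ?thesis .
qed

lemma birkhoff_sum_variance_le:
  "unit_mean (\<lambda>x. ((\<Sum>k<n. f ((tau ^^ k) x)) - real n * unit_mean f)\<^sup>2) \<le> 3 * real n * N * unit_mean f"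
proof -
  let ?m = "unit_mean f"
  let ?g = "\<lambda>k x. f ((tau ^^ k) x) - ?m"
  have bg: "unit_bounded (?g k)" for k
    by (intro unit_bounded_diff unit_bounded_f_funpow_tau unit_bounded_const)
  have "((\<Sum>k<n. f ((tau ^^ k) x)) - real n * ?m)\<^sup>2 = (\<Sum>k<n. \<Sum>l<n. ?g k x * ?g l x)" for x
  proof -
    have "(\<Sum>k<n. f ((tau ^^ k) x)) - real n * ?m = (\<Sum>k<n. ?g k x)"
      by (simp add: sum_subtractf)
    then show ?thesis
      by (simp add: power2_eq_square sum_product)
  qed
  then have "unit_mean (\<lambda>x. ((\<Sum>k<n. f ((tau ^^ k) x)) - real n * ?m)\<^sup>2)
      = (\<Sum>k<n. \<Sum>l<n. unit_mean (\<lambda>x. ?g k x * ?g l x))"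
    by (simp add: unit_mean_sum unit_bounded_sum unit_bounded_mult bg)
  also have "\<dots> \<le> (\<Sum>k<n. \<Sum>l<n. N * ?m * (1/2) ^ (max k l - min k l))"
    by (intro sum_mono covariance_le)
  also have "\<dots> = N * ?m * (\<Sum>k<n. \<Sum>l<n. (1/2) ^ (max k l - min k l))"
    by (simp add: sum_distrib_left)
  also have "\<dots> \<le> N * ?m * (3 * real n)"
    using sum_sum_half_powers_dist_le[of n] N_nonneg unit_mean_f_nonneg
    by (intro mult_left_mono) simp_all
  finally show ?thesis
    by (simp add: ac_simps)
qed

end

section \<open>The truncated digit\<close>

text \<open>On \<open>y \<le> 0\<close> the truncation takes its maximal value \<open>N\<close>, matching \<open>chi 0 = \<infinity>\<close> and keeping
  it decreasing.\<close>

definition trunc_chi :: "real \<Rightarrow> real \<Rightarrow> real" where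
  "trunc_chi N y = (if y \<le> 0 then N else min N (real_of_int \<lfloor>1 / y\<rfloor>))"

lemma trunc_chi_measurable [measurable]: "trunc_chi N \<in> borel_measurable borel"
  unfolding trunc_chi_def by measurable

lemma chi_measurable [measurable]: "chi \<in> borel_measurable borel"
  unfolding chi_def by measurable

lemma Ssum_measurable [measurable]: "Ssum n \<in> borel_measurable borel"
  unfolding Ssum_def digit_def by measurable

lemma trunc_chi_le: "trunc_chi N y \<le> N"
  by (simp add: trunc_chi_def)

lemma trunc_chi_nonneg: "0 \<le> N \<Longrightarrow> 0 \<le> trunc_chi N y"
  by (simp add: trunc_chi_def)

lemma trunc_chi_le_inverse: "0 < y \<Longrightarrow> trunc_chi N y \<le> 1 / y"
  by (simp add: trunc_chi_def min.coboundedI2)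

lemma trunc_chi_eq_floor:
  assumes "0 < N" "1 / N \<le> y"
  shows "trunc_chi N y = \<lfloor>1 / y\<rfloor>"
proof -
  have "0 < 1 / N" using assms(1) by simp
  with assms(2) have "0 < y" by linarith
  have "inverse y \<le> inverse (1 / N)"
    using assms(2) \<open>0 < 1 / N\<close> by (rule le_imp_inverse_le)
  then have "1 / y \<le> N"
    by (simp add: inverse_eq_divide)
  then have "real_of_int \<lfloor>1 / y\<rfloor> \<le> N"
    by (meson of_int_floor_le order_trans)
  with \<open>0 < y\<close> show ?thesis
    by (simp add: trunc_chi_def)
qed

lemma decreasing_observable_trunc_chi:
  assumes "0 \<le> N"
  shows "decreasing_observable (trunc_chi N) N"
proof
  show "antimono_on {0..<1} (trunc_chi N)"
  proof (rule monotone_onI)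
    fix x y :: real assume "x \<le> y"
    show "trunc_chi N y \<le> trunc_chi N x"
    proof (cases "x \<le> 0")
      case True
      then show ?thesis by (simp add: trunc_chi_def)
    next
      case False
      with \<open>x \<le> y\<close> have "\<lfloor>1 / y\<rfloor> \<le> \<lfloor>1 / x\<rfloor>"
        by (intro floor_mono frac_le) auto
      with False \<open>x \<le> y\<close> show ?thesis
        by (auto simp: trunc_chi_def min_def)
    qed
  qed
qed (simp_all add: assms trunc_chi_le trunc_chi_nonneg)

lemma chi_eq_trunc_chi: "0 < N \<Longrightarrow> 1 / N \<le> y \<Longrightarrow> chi y = ereal (trunc_chi N y)"
  by (auto simp: chi_def trunc_chi_eq_floor)

lemma Ssum_eq_trunc_chi_sum:
  assumes "0 < N" "\<And>k. k < n \<Longrightarrow> 1 / N \<le> (tau ^^ k) x"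
  shows "Ssum n x = ereal (\<Sum>k<n. trunc_chi N ((tau ^^ k) x))"
proof -
  have "Ssum n x = (\<Sum>k<n. digit (Suc k) x)"
    unfolding Ssum_def by (simp add: sum.atLeast1_atMost_eq)
  also have "\<dots> = (\<Sum>k<n. ereal (trunc_chi N ((tau ^^ k) x)))"
    using assms by (intro sum.cong) (auto simp: digit_def chi_eq_trunc_chi)
  finally show ?thesis by simp
qed

lemma integral_indicator_inverse:
  assumes N: "1 \<le> (N::real)"
  shows "(\<integral>x. indicator {1/N..1} x / x \<partial>lborel) = ln N"
proof -
  have "(\<integral>x. indicator {1/N..1} x *\<^sub>R (1 / x) \<partial>lborel) = ln 1 - ln (1/N)"
  proof (rule integral_FTC_atLeastAtMost[where F = ln and f = "\<lambda>x. 1 / x" and a = "1/N" and b = 1])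
    fix x assume "1/N \<le> x"
    then have "0 < x" using N by (smt (verit) divide_pos_pos)
    then show "(ln has_vector_derivative 1 / x) (at x within {1/N..1})"
      by (auto intro!: has_field_derivative_at_within DERIV_ln_divide
          simp: has_real_derivative_iff_has_vector_derivative[symmetric])
  next
    have "0 \<notin> {1/N..1::real}" using N by auto
    then show "continuous_on {1/N..1} (\<lambda>x. 1 / x)"
      by (intro continuous_intros) auto
  qed (use N in auto)
  then show ?thesis
    using N by (simp add: ln_inverse divide_inverse)
qed

lemma unit_mean_trunc_chi_bounds:
  assumes N: "1 \<le> N"
  shows "ln N - 1 \<le> unit_mean (trunc_chi N)" "unit_mean (trunc_chi N) \<le> ln N + 1"
proof -
  have N0: "0 < 1 / N" "1 / N \<le> 1" using N by auto
  have cont: "isCont (\<lambda>x. 1 / x) x" if "1 / N \<le> x" for x :: real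
    using N0 that by (intro continuous_intros) auto
  have inv: "integrable lborel (\<lambda>x. indicator {1/N..1} x / x)"
    using borel_integrable_atLeastAtMost[of "1/N" 1 "\<lambda>x. 1 / x"] cont by simp
  have ind: "integrable lborel (\<lambda>x. indicator {a..b} x :: real)" for a b :: real
    by (rule integrable_real_indicator) (auto simp: emeasure_lborel_Icc_eq)
  have trunc: "integrable lborel (\<lambda>x. indicator {0..<1} x * trunc_chi N x)"
    using N by (intro integrable_unit_bounded decreasing_observable.unit_bounded_f[of _ N]
        decreasing_observable_trunc_chi) auto
  have "unit_mean (trunc_chi N) \<le> (\<integral>x. N * indicator {0..1/N} x + indicator {1/N..1} x / x \<partial>lborel)"
  proof (rule integral_mono[OF trunc Bochner_Integration.integrable_add[OF _ inv]])
    fix y :: real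
    have "1 / N \<le> y \<Longrightarrow> 0 < y" using N0 by linarith
    then show "indicator {0..<1} y * trunc_chi N y \<le> N * indicator {0..1/N} y + indicator {1/N..1} y / y"
      using N trunc_chi_le[of N y] trunc_chi_le_inverse[of y N] by (auto split: split_indicator)
  qed (use ind in simp)
  also have "\<dots> = ln N + 1"
    using N ind inv by (simp add: integral_indicator_inverse)
  finally show "unit_mean (trunc_chi N) \<le> ln N + 1" .
  have "ln N - (1 - 1 / N) = (\<integral>x. indicator {1/N..1} x / x - indicator {1/N..1} x \<partial>lborel)"
    using N0 ind inv by (simp add: integral_indicator_inverse N)
  also have "\<dots> \<le> unit_mean (trunc_chi N)"
  proof (rule integral_mono[OF Bochner_Integration.integrable_diff[OF inv ind] trunc])
    fix y :: real
    have "1 / N \<le> y \<Longrightarrow> 1 / y - 1 \<le> trunc_chi N y"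
      using N by (simp add: trunc_chi_eq_floor)
    then show "indicator {1/N..1} y / y - indicator {1/N..1} y \<le> indicator {0..<1} y * trunc_chi N y"
      using N trunc_chi_nonneg[of N y] by (cases "y = 1") (auto split: split_indicator)
  qed
  finally show "ln N - 1 \<le> unit_mean (trunc_chi N)"
    using N0 by linarith
qed

section \<open>Concentration of the digit sums\<close>

lemma deviation_witness:
  assumes "0 < N" "0 < c" "0 < d" "\<bar>real n * m - c\<bar> + d \<le> \<epsilon> * c"
    and "\<bar>Ssum n x / ereal c - 1\<bar> > ereal \<epsilon>"
  shows "1 \<le> (\<Sum>k<n. indicator {..<1/N} ((tau ^^ k) x))
    + (1 / d\<^sup>2) * ((\<Sum>k<n. trunc_chi N ((tau ^^ k) x)) - real n * m)\<^sup>2"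
    (is "1 \<le> ?small + _ * (?T - _)\<^sup>2")
proof -
  have small: "0 \<le> ?small" and dev: "0 \<le> (1 / d\<^sup>2) * (?T - real n * m)\<^sup>2"
    by (simp_all add: sum_nonneg)
  show ?thesis
  proof (cases "\<exists>k<n. (tau ^^ k) x < 1/N")
    case True
    then obtain k where "k < n" "(tau ^^ k) x < 1/N" by blast
    then have "1 \<le> ?small"
      by (intro member_le_sum[of k, THEN order_trans[rotated]]) (auto split: split_indicator)
    with dev show ?thesis by linarith
  next
    case False
    then have "Ssum n x = ereal ?T"
      using assms(1) by (intro Ssum_eq_trunc_chi_sum) auto
    with assms(2,5) have "\<epsilon> < \<bar>?T / c - 1\<bar>"
      by (simp add: one_ereal_def)
    with assms(2) have "\<epsilon> * c < \<bar>?T - c\<bar>"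
      by (metis abs_of_pos diff_divide_distrib divide_self_if less_divide_eq abs_divide order_less_irrefl)
    with assms(4) have "d \<le> \<bar>?T - real n * m\<bar>"
      by linarith
    with assms(3) have "d\<^sup>2 \<le> (?T - real n * m)\<^sup>2"
      by (metis abs_of_pos power2_abs power_mono less_imp_le)
    with assms(3) have "1 \<le> (1 / d\<^sup>2) * (?T - real n * m)\<^sup>2"
      by (simp add: le_divide_eq)
    with small show ?thesis by linarith
  qed
qed

lemma measure_deviation_le:
  assumes N: "1 \<le> N" and c: "0 < c" and d: "0 < d"
    and close: "\<bar>real n * unit_mean (trunc_chi N) - c\<bar> + d \<le> \<epsilon> * c"
  shows "measure lborel {x \<in> {0..<1::real}. \<bar>Ssum n x / ereal c - 1\<bar> > ereal \<epsilon>}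
    \<le> real n / N + 3 * real n * N * unit_mean (trunc_chi N) / d\<^sup>2"
proof -
  interpret decreasing_observable "trunc_chi N" N
    using N by (intro decreasing_observable_trunc_chi) simp
  have N_inv: "1 / N \<le> 1"
    using N by simp
  let ?m = "unit_mean (trunc_chi N)"
  let ?small = "\<lambda>x. \<Sum>k<n. indicator {..<1/N} ((tau ^^ k) x)"
  let ?dev = "\<lambda>x. ((\<Sum>k<n. trunc_chi N ((tau ^^ k) x)) - real n * ?m)\<^sup>2"
  have small_k: "unit_bounded (\<lambda>x. indicator {..<1/N} ((tau ^^ k) x))" for k
    by (rule unit_bounded_funpow_tau[OF unit_bounded_indicator]) simp
  then have small: "unit_bounded ?small"
    by (rule unit_bounded_sum)
  have dev: "unit_bounded (\<lambda>x. (1 / d\<^sup>2) * ?dev x)"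
    unfolding power2_eq_square
    by (intro unit_bounded_mult unit_bounded_diff unit_bounded_sum unit_bounded_const
        unit_bounded_f_funpow_tau)
  have "measure lborel {x \<in> {0..<1::real}. \<bar>Ssum n x / ereal c - 1\<bar> > ereal \<epsilon>}
      \<le> unit_mean (\<lambda>x. ?small x + (1 / d\<^sup>2) * ?dev x)"
  proof (rule measure_unit_le_unit_mean)
    show "{x. \<bar>Ssum n x / ereal c - 1\<bar> > ereal \<epsilon>} \<in> sets borel"
      by measurable
    show "unit_bounded (\<lambda>x. ?small x + (1 / d\<^sup>2) * ?dev x)"
      using small dev by (rule unit_bounded_add)
    show "0 \<le> ?small x + (1 / d\<^sup>2) * ?dev x" for x
      by (simp add: sum_nonneg)
    show "1 \<le> ?small x + (1 / d\<^sup>2) * ?dev x" if "\<bar>Ssum n x / ereal c - 1\<bar> > ereal \<epsilon>" for x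
      using N by (intro deviation_witness[OF _ c d close that]) simp
  qed
  also have "\<dots> = (\<Sum>k<n. unit_mean (\<lambda>x. indicator {..<1/N} ((tau ^^ k) x))) + (1 / d\<^sup>2) * unit_mean ?dev"
    by (simp only: unit_mean_add[OF small dev] unit_mean_sum[OF _ small_k] unit_mean_cmult finite_lessThan)
  also have "(\<lambda>k. unit_mean (\<lambda>x. indicator {..<1/N} ((tau ^^ k) x))) = (\<lambda>_. unit_mean (indicator {..<1/N}))"
    by (simp add: unit_mean_funpow_tau[OF unit_bounded_indicator])
  also have "unit_mean (indicator {..<1/N}) = (\<integral>x. indicator {0..<1/N} x \<partial>lborel)"
    using N_inv by (intro Bochner_Integration.integral_cong) (auto split: split_indicator)
  also have "\<dots> = 1 / N"
    using N by simp
  also have "(1 / d\<^sup>2) * unit_mean ?dev \<le> (1 / d\<^sup>2) * (3 * real n * N * ?m)"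
    by (intro mult_left_mono birkhoff_sum_variance_le) simp
  finally show ?thesis
    by simp
qed

definition deviation_bound :: "real \<Rightarrow> nat \<Rightarrow> real" where
  "deviation_bound \<epsilon> n = 1 / sqrt (ln n)
    + (12 / \<epsilon>\<^sup>2) * (sqrt (ln n) * (ln (n * sqrt (ln n)) + 1) / (ln n)\<^sup>2)"

lemma deviation_bound_tendsto_zero: "deviation_bound \<epsilon> \<longlonglongrightarrow> 0"
proof -
  have "(\<lambda>n::nat. 1 / sqrt (ln n)) \<longlonglongrightarrow> 0"
    and "(\<lambda>n::nat. sqrt (ln n) * (ln (n * sqrt (ln n)) + 1) / (ln n)\<^sup>2) \<longlonglongrightarrow> 0"
    by real_asymp+
  then have "deviation_bound \<epsilon> \<longlonglongrightarrow> 0 + (12 / \<epsilon>\<^sup>2) * 0"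
    unfolding deviation_bound_def[abs_def] by (intro tendsto_intros)
  then show ?thesis by simp
qed

text \<open>The truncation level is \<open>N = n s\<close> with \<open>s = sqrt (ln n)\<close>; the second hypothesis makes
  \<open>\<bar>n m - n ln n\<bar> \<le> n (ln s + 1)\<close> at most half of the admissible deviation \<open>\<epsilon> n ln n\<close>.\<close>

lemma measure_deviation_le_bound:
  assumes \<epsilon>: "0 < \<epsilon>" and L1: "1 \<le> ln (real n)"
    and small: "(ln (sqrt (ln (real n))) + 1) / ln (real n) < \<epsilon> / 2"
  shows "measure lborel {x \<in> {0..<1::real}. \<bar>Ssum n x / ereal (real n * ln (real n)) - 1\<bar> > ereal \<epsilon>}
    \<le> deviation_bound \<epsilon> n"
proof -
  define L where "L = ln (real n)"
  define s where "s = sqrt L"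
  define N where "N = real n * s"
  define m where "m = unit_mean (trunc_chi N)"
  define c where "c = real n * L"
  have n1: "1 \<le> real n"
    using L1 by (cases n) auto
  have s1: "1 \<le> s" and L: "1 \<le> L"
    using L1 by (simp_all add: s_def L_def)
  have N1: "1 \<le> N"
    using n1 s1 mult_mono'[of 1 "real n" 1 s] by (simp add: N_def)
  have "ln N = L + ln s"
    using n1 s1 by (simp add: N_def L_def ln_mult)
  moreover have m: "ln N - 1 \<le> m" "m \<le> ln N + 1"
    using unit_mean_trunc_chi_bounds[OF N1] by (simp_all add: m_def)
  moreover have "0 \<le> ln s"
    using s1 by simp
  ultimately have "\<bar>m - L\<bar> \<le> ln s + 1"
    by linarith
  also have "\<dots> < \<epsilon> / 2 * L"
    using small L by (simp add: L_def s_def divide_less_eq)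
  finally have mL: "\<bar>m - L\<bar> \<le> \<epsilon> / 2 * L"
    by linarith
  have "\<bar>real n * m - c\<bar> = real n * \<bar>m - L\<bar>"
    by (simp add: c_def abs_mult flip: right_diff_distrib)
  also have "\<dots> \<le> real n * (\<epsilon> / 2 * L)"
    using mL n1 by (intro mult_left_mono) auto
  also have "\<dots> = \<epsilon> * c / 2"
    by (simp add: c_def)
  finally have close: "\<bar>real n * m - c\<bar> + \<epsilon> * c / 2 \<le> \<epsilon> * c"
    by linarith
  have "measure lborel {x \<in> {0..<1::real}. \<bar>Ssum n x / ereal c - 1\<bar> > ereal \<epsilon>}
      \<le> real n / N + 3 * real n * N * m / (\<epsilon> * c / 2)\<^sup>2"
    using measure_deviation_le[OF N1 _ _ close[unfolded m_def]] \<epsilon> n1 L by (simp add: c_def m_def)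
  also have "\<dots> = 1 / s + (12 / \<epsilon>\<^sup>2) * (s * m / L\<^sup>2)"
    using n1 L \<epsilon> by (simp add: N_def c_def field_simps power2_eq_square)
  also have "\<dots> \<le> 1 / s + (12 / \<epsilon>\<^sup>2) * (s * (ln N + 1) / L\<^sup>2)"
    using m s1 by (intro add_left_mono mult_left_mono divide_right_mono) auto
  finally show ?thesis
    by (simp add: deviation_bound_def c_def L_def s_def N_def)
qed

theorem theorem1p3:
  shows "(\<forall>n (\<epsilon>::real).
           {x \<in> {0..<1::real}. \<bar>Ssum n x / ereal (real n * ln (real n)) - 1\<bar> > ereal \<epsilon>}
             \<in> sets lborel)
       \<and> (\<forall>\<epsilon>::real. \<epsilon> > 0 \<longrightarrow>
           (\<lambda>n. measure lborel
                  {x \<in> {0..<1::real}. \<bar>Ssum n x / ereal (real n * ln (real n)) - 1\<bar> > ereal \<epsilon>})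
           \<longlonglongrightarrow> 0)"
proof (intro conjI allI impI)
  fix n :: nat and \<epsilon> :: real
  show "{x \<in> {0..<1::real}. \<bar>Ssum n x / ereal (real n * ln (real n)) - 1\<bar> > ereal \<epsilon>} \<in> sets lborel"
    by measurable
next
  fix \<epsilon> :: real assume \<epsilon>: "\<epsilon> > 0"
  have "eventually (\<lambda>n::nat. 1 \<le> ln (real n)) sequentially"
    by real_asymp
  moreover have "(\<lambda>n::nat. (ln (sqrt (ln (real n))) + 1) / ln (real n)) \<longlonglongrightarrow> 0"
    by real_asymp
  then have "eventually (\<lambda>n. (ln (sqrt (ln (real n))) + 1) / ln (real n) < \<epsilon> / 2) sequentially"
    using \<epsilon> by (intro order_tendstoD(2)) auto
  ultimately have "eventually (\<lambda>n. measure lborel {x \<in> {0..<1::real}.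
      \<bar>Ssum n x / ereal (real n * ln (real n)) - 1\<bar> > ereal \<epsilon>} \<le> deviation_bound \<epsilon> n) sequentially"
    by eventually_elim (rule measure_deviation_le_bound[OF \<epsilon>])
  then show "(\<lambda>n. measure lborel {x \<in> {0..<1::real}.
      \<bar>Ssum n x / ereal (real n * ln (real n)) - 1\<bar> > ereal \<epsilon>}) \<longlonglongrightarrow> 0"
    by (intro tendsto_sandwich[OF _ _ tendsto_const deviation_bound_tendsto_zero]) auto
qed

end
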